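(* Let $X$ be a Hausdorff space. The following are equivalent: (a) $X$ is a weak $P$-space; (b) $\mathcal{K}(X)$ is a weak $P$-space; (c) $\mathcal{F}(X)$ is a weak $P$-space; (d) $\mathcal{F}_n(X)$ is a weak $P$-space for some positive integer $n$.
   Context: For a $T_1$ space $X$, $\mathcal{K}(X)$ is the set of nonempty compact subsets of $X$ with the Vietoris topology (generated by $U^+=\{A: A\subset U\}$ and $U^-=\{A: A\cap U\neq\emptyset\}$ for $U$ open in $X$); $\mathcal{F}(X)$ and $\mathcal{F}_n(X)$ are its subspaces of nonempty finite subsets and of nonempty subsets with at most $n$ points. A point $p$ of a space $Z$ is a weak $P$-point if $p\notin\overline{N}$ for every countable $N\subset Z-\{p\}$; $Z$ is a weak $P$-space if all its points are weak $P$-points. *)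

theory Defs
  imports "HOL-Analysis.Analysis"
begin

definition compact_subsets :: "'a topology \<Rightarrow> 'a set set" where
  "compact_subsets X = {A. A \<noteq> {} \<and> compactin X A}"

definition vietoris :: "'a topology \<Rightarrow> 'a set topology" where
  "vietoris X = topology_generated_by
     ({ {A \<in> compact_subsets X. A \<subseteq> U} | U. openin X U } \<union>
      { {A \<in> compact_subsets X. A \<inter> U \<noteq> {}} | U. openin X U })"

definition hyp_finite :: "'a topology \<Rightarrow> 'a set topology" where
  "hyp_finite X = subtopology (vietoris X) {A \<in> compact_subsets X. finite A}"

definition hyp_finite_n :: "'a topology \<Rightarrow> nat \<Rightarrow> 'a set topology" where
  "hyp_finite_n X n = subtopology (vietoris X) {A \<in> compact_subsets X. finite A \<and> card A \<le> n}"

definition weak_P_point :: "'b topology \<Rightarrow> 'b \<Rightarrow> bool" where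
  "weak_P_point Z p \<longleftrightarrow> p \<in> topspace Z \<and>
     (\<forall>N. countable N \<and> N \<subseteq> topspace Z - {p} \<longrightarrow> p \<notin> Z closure_of N)"

definition weak_P_space :: "'b topology \<Rightarrow> bool" where
  "weak_P_space Z \<longleftrightarrow> (\<forall>p \<in> topspace Z. weak_P_point Z p)"

end

theory Submission
  imports Defs
begin

text \<open>
  In a weak P-space every countable set is closed; since an infinite compact set contains a
  countable set with an accumulation point, compact sets are finite. So a point \<open>A\<close> of
  \<open>\<K>(X)\<close> is finite, and for a countable family \<open>\<N>\<close> of finite sets not containing \<open>A\<close>
  the union \<open>S = \<Union>\<N>\<close> is countable. Then \<open>X - (S - A)\<close> and all \<open>X - (S - {a})\<close>, \<open>a \<in> A\<close>,
  are open, and the Vietoris neighbourhood of \<open>A\<close> consisting of the sets contained in the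
  first one and meeting all the others misses \<open>\<N>\<close>.
  Conversely \<open>x \<mapsto> {x}\<close> maps \<open>X\<close> continuously and injectively into
  \<open>\<F>\<^sub>n(X) \<subseteq> \<F>(X) \<subseteq> \<K>(X)\<close>, and the weak P-property pulls back along continuous injections.
\<close>

lemma weak_P_space_iff_countable_closedin:
  "weak_P_space Z \<longleftrightarrow> (\<forall>N. countable N \<and> N \<subseteq> topspace Z \<longrightarrow> closedin Z N)"
proof
  assume wp: "weak_P_space Z"
  show "\<forall>N. countable N \<and> N \<subseteq> topspace Z \<longrightarrow> closedin Z N"
  proof (intro allI impI)
    fix N assume N: "countable N \<and> N \<subseteq> topspace Z"
    have "p \<in> N" if p: "p \<in> Z closure_of N" for p
    proof (rule ccontr)
      assume "p \<notin> N"
      with N have "N \<subseteq> topspace Z - {p}" by auto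
      moreover have "p \<in> topspace Z" using p in_closure_of by metis
      ultimately show False
        using wp N p unfolding weak_P_space_def weak_P_point_def by blast
    qed
    with N show "closedin Z N" using closure_of_subset_eq by blast
  qed
next
  assume closed: "\<forall>N. countable N \<and> N \<subseteq> topspace Z \<longrightarrow> closedin Z N"
  show "weak_P_space Z"
    unfolding weak_P_space_def weak_P_point_def
  proof (intro ballI conjI allI impI)
    fix p N assume N: "countable N \<and> N \<subseteq> topspace Z - {p}"
    then have "closedin Z N" using closed by blast
    with N show "p \<notin> Z closure_of N" by (auto simp: closure_of_closedin)
  qed
qed

lemma weak_P_point_notin_derived_set_of:
  assumes "weak_P_point Z p" and "countable N"
  shows "p \<notin> Z derived_set_of N"
proof
  assume p: "p \<in> Z derived_set_of N"
  have "p \<in> Z closure_of (topspace Z \<inter> N - {p})"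
    using p unfolding in_derived_set_of in_closure_of by blast
  moreover have "countable (topspace Z \<inter> N - {p})"
    using assms(2) by (simp add: countable_subset[of _ N])
  ultimately show False
    using assms(1) unfolding weak_P_point_def by blast
qed

lemma weak_P_space_compactin_imp_finite:
  assumes wp: "weak_P_space X" and A: "compactin X A"
  shows "finite A"
proof (rule ccontr)
  assume "infinite A"
  then obtain C where C: "C \<subseteq> A" "countable C" "infinite C"
    using infinite_countable_subset' by blast
  then have "A \<inter> X derived_set_of C \<noteq> {}"
    using compactin_imp_Bolzano_Weierstrass[OF A] by simp
  then obtain p where p: "p \<in> A" "p \<in> X derived_set_of C"
    by blast
  have "weak_P_point X p"
    using wp p(1) compactin_subset_topspace[OF A] unfolding weak_P_space_def by blast
  from weak_P_point_notin_derived_set_of[OF this C(2)] p(2) show False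
    by blast
qed


lemma weak_P_space_subtopology:
  assumes "weak_P_space Z"
  shows "weak_P_space (subtopology Z S)"
  unfolding weak_P_space_iff_countable_closedin
proof (intro allI impI)
  fix N assume N: "countable N \<and> N \<subseteq> topspace (subtopology Z S)"
  then have "closedin Z N"
    using assms unfolding weak_P_space_iff_countable_closedin by auto
  moreover have "N = N \<inter> S" using N by auto
  ultimately show "closedin (subtopology Z S) N"
    unfolding closedin_subtopology by blast
qed


lemma weak_P_space_continuous_injective:
  assumes f: "continuous_map X Z f" and inj: "inj_on f (topspace X)"
    and wp: "weak_P_space Z"
  shows "weak_P_space X"
  unfolding weak_P_space_def weak_P_point_def
proof (intro ballI conjI allI impI)
  fix p N assume p: "p \<in> topspace X" and N: "countable N \<and> N \<subseteq> topspace X - {p}"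
  have "f ` N \<subseteq> topspace Z"
    using N continuous_map_image_subset_topspace[OF f] by blast
  moreover have "f p \<notin> f ` N"
    using inj_on_image_mem_iff[OF inj p] N by blast
  moreover have "f p \<in> topspace Z"
    using p continuous_map_image_subset_topspace[OF f] by blast
  moreover have "countable (f ` N)"
    using N by blast
  ultimately have "f p \<notin> Z closure_of (f ` N)"
    using wp unfolding weak_P_space_def weak_P_point_def by blast
  then show "p \<notin> X closure_of N"
    using continuous_map_image_closure_subset[OF f, of N] by (meson image_eqI subsetD)
qed

lemma topspace_vietoris [simp]: "topspace (vietoris X) = compact_subsets X"
proof -
  have "compact_subsets X \<subseteq> {A \<in> compact_subsets X. A \<subseteq> topspace X}"
    unfolding compact_subsets_def using compactin_subset_topspace by blast
  then show ?thesis
    unfolding vietoris_def topology_generated_by_topspace by blast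
qed

lemma openin_vietoris_upper:
  "openin X U \<Longrightarrow> openin (vietoris X) {A \<in> compact_subsets X. A \<subseteq> U}"
  unfolding vietoris_def by (rule topology_generated_by_Basis) blast

lemma openin_vietoris_lower:
  "openin X U \<Longrightarrow> openin (vietoris X) {A \<in> compact_subsets X. A \<inter> U \<noteq> {}}"
  unfolding vietoris_def by (rule topology_generated_by_Basis) blast

lemma singleton_in_compact_subsets: "x \<in> topspace X \<Longrightarrow> {x} \<in> compact_subsets X"
  unfolding compact_subsets_def by simp

lemma continuous_map_vietoris_singleton: "continuous_map X (vietoris X) (\<lambda>x. {x})"
  unfolding vietoris_def
proof (rule continuous_on_generated_topo)
  fix V assume "V \<in> { {A \<in> compact_subsets X. A \<subseteq> U} | U. openin X U } \<union>
      { {A \<in> compact_subsets X. A \<inter> U \<noteq> {}} | U. openin X U }"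
  then obtain U where U: "openin X U" and
    "V = {A \<in> compact_subsets X. A \<subseteq> U} \<or> V = {A \<in> compact_subsets X. A \<inter> U \<noteq> {}}"
    by blast
  then have "(\<lambda>x. {x}) -` V \<inter> topspace X = U"
    using openin_subset[OF U] singleton_in_compact_subsets[of _ X] by auto
  with U show "openin X ((\<lambda>x. {x}) -` V \<inter> topspace X)" by simp
next
  have "(\<lambda>x. {x}) ` topspace X \<subseteq> topspace (vietoris X)"
    using singleton_in_compact_subsets[of _ X] by auto
  then show "(\<lambda>x. {x}) ` topspace X \<subseteq> \<Union> ({ {A \<in> compact_subsets X. A \<subseteq> U} | U. openin X U } \<union>
      { {A \<in> compact_subsets X. A \<inter> U \<noteq> {}} | U. openin X U })"
    unfolding vietoris_def topology_generated_by_topspace .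
qed

lemma openin_vietoris_basic:
  assumes "finite I" and "openin X U" and "\<And>i. i \<in> I \<Longrightarrow> openin X (W i)"
  shows "openin (vietoris X) {A \<in> compact_subsets X. A \<subseteq> U \<and> (\<forall>i\<in>I. A \<inter> W i \<noteq> {})}"
proof -
  have "{A \<in> compact_subsets X. A \<subseteq> U \<and> (\<forall>i\<in>I. A \<inter> W i \<noteq> {})}
      = {A \<in> compact_subsets X. A \<subseteq> U}
        \<inter> \<Inter> ((\<lambda>i. {A \<in> compact_subsets X. A \<inter> W i \<noteq> {}}) ` I)"
    by auto
  moreover have "openin (vietoris X) ({A \<in> compact_subsets X. A \<subseteq> U}
        \<inter> \<Inter> ((\<lambda>i. {A \<in> compact_subsets X. A \<inter> W i \<noteq> {}}) ` I))"
    using assms by (intro openin_Int_Inter openin_vietoris_upper) (auto intro: openin_vietoris_lower)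
  ultimately show ?thesis by simp
qed

lemma weak_P_space_vietoris:
  assumes wp: "weak_P_space X"
  shows "weak_P_space (vietoris X)"
  unfolding weak_P_space_def weak_P_point_def
proof (intro ballI conjI allI impI)
  fix A \<N> assume A: "A \<in> topspace (vietoris X)"
    and \<N>: "countable \<N> \<and> \<N> \<subseteq> topspace (vietoris X) - {A}"
  have finite: "finite B" "B \<subseteq> topspace X" if "B \<in> compact_subsets X" for B
    using that weak_P_space_compactin_imp_finite[OF wp] compactin_subset_topspace
    unfolding compact_subsets_def by blast+
  define S where "S = \<Union>\<N>"
  have "countable (\<Union>B\<in>\<N>. B)"
    using \<N> finite(1) by (intro countable_UN) (auto intro: countable_finite)
  then have "countable S"
    unfolding S_def by simp
  moreover have "S \<subseteq> topspace X"
    unfolding S_def using \<N> finite(2) by auto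
  ultimately have closed: "closedin X T" if "T \<subseteq> S" for T
    using that wp countable_subset[OF that]
    unfolding weak_P_space_iff_countable_closedin by blast
  define V where "V = {B \<in> compact_subsets X. B \<subseteq> topspace X - (S - A)
                        \<and> (\<forall>a\<in>A. B \<inter> (topspace X - (S - {a})) \<noteq> {})}"
  have "openin (vietoris X) V"
    unfolding V_def using A finite(1) closed
    by (intro openin_vietoris_basic openin_diff) auto
  moreover have "A \<in> V"
    unfolding V_def using A finite(2) by auto
  moreover have "B = A" if "B \<in> \<N>" "B \<in> V" for B
  proof -
    have "B \<subseteq> S" unfolding S_def using that(1) by blast
    with that(2) show "B = A" unfolding V_def by blast
  qed
  ultimately show "A \<notin> vietoris X closure_of \<N>"
    using \<N> unfolding in_closure_of by blast
qed

lemma weak_P_space_from_hyperspace: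
  assumes "\<And>x. x \<in> topspace X \<Longrightarrow> {x} \<in> T"
    and "weak_P_space (subtopology (vietoris X) T)"
  shows "weak_P_space X"
proof (rule weak_P_space_continuous_injective)
  show "continuous_map X (subtopology (vietoris X) T) (\<lambda>x. {x})"
    using assms(1) continuous_map_vietoris_singleton
    by (auto intro: continuous_map_into_subtopology)
qed (use assms(2) in \<open>auto simp: inj_on_def\<close>)

theorem theorem4p4:
  fixes X :: "'a topology"
  assumes "Hausdorff_space X"
  shows "(weak_P_space X \<longleftrightarrow> weak_P_space (vietoris X))
       \<and> (weak_P_space X \<longleftrightarrow> weak_P_space (hyp_finite X))
       \<and> (weak_P_space X \<longleftrightarrow> (\<exists>n::nat. n \<ge> 1 \<and> weak_P_space (hyp_finite_n X n)))"
proof -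
  have hyperspace: "weak_P_space X \<longleftrightarrow> weak_P_space (subtopology (vietoris X) T)"
    if "\<And>x. x \<in> topspace X \<Longrightarrow> {x} \<in> T" for T
    using that weak_P_space_from_hyperspace weak_P_space_subtopology weak_P_space_vietoris
    by blast
  have "vietoris X = subtopology (vietoris X) (compact_subsets X)"
    by (metis subtopology_topspace topspace_vietoris)
  then have "weak_P_space X \<longleftrightarrow> weak_P_space (vietoris X)"
    using hyperspace singleton_in_compact_subsets by metis
  moreover have "weak_P_space X \<longleftrightarrow> weak_P_space (hyp_finite X)"
    unfolding hyp_finite_def by (rule hyperspace) (simp add: singleton_in_compact_subsets)
  moreover have "weak_P_space X \<longleftrightarrow> weak_P_space (hyp_finite_n X n)" if "n \<ge> 1" for n
    unfolding hyp_finite_n_def using that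
    by (intro hyperspace) (simp add: singleton_in_compact_subsets)
  ultimately show ?thesis by blast
qed

end
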